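(* There is an absolute constant $C\ge0$ such that the following holds. Assume $\bar u\in\mathbb{R}^n_{>0}$, $f:[0,\bar u]\to\mathbb{R}$ is differentiable, nonnegative, DR-submodular with $L$-Lipschitz gradient, $\mathcal{P}\subseteq[0,\bar u]$ is nonempty compact convex down-closed with diameter $D$, and $x^*\in\arg\max_{x\in\mathcal{P}}f(x)$. Running the non-monotone Frank-Wolfe procedure (defined in the context) with step size $\gamma\in(0,1]$, for every $k=1,\dots,K$, $$f(x^{(k)})\ge t^{(k)}e^{-t^{(k)}}f(x^* )-\frac{LD^2}{2}k\gamma^2-C\gamma^2 f(x^* ).$$
   Context: Inequalities between vectors are componentwise. Down-closed: $x\in\mathcal{P}$, $0\le y\le x$ imply $y\in\mathcal{P}$; diameter $D=\max_{x,y\in\mathcal{P}}\|x-y\|$. DR-submodular: for all $a\le b$ in the domain, $i\in[n]$, $k\ge0$ with $a+ke_i,b+ke_i$ in the domain, $f(a+ke_i)-f(a)\ge f(b+ke_i)-f(b)$. $L$-Lipschitz gradient: $\|\nabla f(x)-\nabla f(y)\|\le L\|x-y\|$. Non-monotone Frank-Wolfe with step size $\gamma\in(0,1]$: $x^{(0)}=0$, $t^{(0)}=0$; while $t^{(k)}<1$: choose $v^{(k)}\in\arg\max\{\langle v,\nabla f(x^{(k)})\rangle: v\in\mathcal{P},\ v\le\bar u-x^{(k)}\}$, set $\gamma_k=\min\{\gamma,1-t^{(k)}\}$, $x^{(k+1)}=x^{(k)}+\gamma_k v^{(k)}$, $t^{(k+1)}=t^{(k)}+\gamma_k$. $K$ is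 the total number of iterations ($t^{(K)}=1$). *)

theory Defs
  imports "HOL-Analysis.Analysis"
begin

text \<open>Vectors of R^n are represented as functions nat => real that vanish at
  all coordinates i >= n.  This lets the dimension n be quantified inside the
  statement (needed because the constant C must be independent of n).
  The order on nat => real is the pointwise (componentwise) order of Main,
  and the topology is the product topology (Function_Topology), which agrees
  with the Euclidean topology on the finite-dimensional subspace R^n.\<close>

definition Rn :: "nat \<Rightarrow> (nat \<Rightarrow> real) set" where
  "Rn n = {x. \<forall>i\<ge>n. x i = 0}"

definition inner_n :: "nat \<Rightarrow> (nat \<Rightarrow> real) \<Rightarrow> (nat \<Rightarrow> real) \<Rightarrow> real" where
  "inner_n n x y = (\<Sum>i<n. x i * y i)"

definition norm_n :: "nat \<Rightarrow> (nat \<Rightarrow> real) \<Rightarrow> real" where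
  "norm_n n x = sqrt (\<Sum>i<n. (x i)\<^sup>2)"

definition vsub :: "(nat \<Rightarrow> real) \<Rightarrow> (nat \<Rightarrow> real) \<Rightarrow> (nat \<Rightarrow> real)" where
  "vsub x y = (\<lambda>i. x i - y i)"

definition vadd :: "(nat \<Rightarrow> real) \<Rightarrow> (nat \<Rightarrow> real) \<Rightarrow> (nat \<Rightarrow> real)" where
  "vadd x y = (\<lambda>i. x i + y i)"

definition vscale :: "real \<Rightarrow> (nat \<Rightarrow> real) \<Rightarrow> (nat \<Rightarrow> real)" where
  "vscale c x = (\<lambda>i. c * x i)"

definition unitv :: "nat \<Rightarrow> (nat \<Rightarrow> real)" where
  "unitv i = (\<lambda>j. if j = i then 1 else 0)"

definition box0 :: "(nat \<Rightarrow> real) \<Rightarrow> (nat \<Rightarrow> real) set" where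
  "box0 u = {x. (\<lambda>_. 0) \<le> x \<and> x \<le> u}"

definition convex_n :: "(nat \<Rightarrow> real) set \<Rightarrow> bool" where
  "convex_n S \<longleftrightarrow> (\<forall>x\<in>S. \<forall>y\<in>S. \<forall>a::real. 0 \<le> a \<and> a \<le> 1 \<longrightarrow>
      (\<lambda>i. a * x i + (1 - a) * y i) \<in> S)"

definition down_closed :: "(nat \<Rightarrow> real) set \<Rightarrow> bool" where
  "down_closed S \<longleftrightarrow> (\<forall>x\<in>S. \<forall>y. (\<lambda>_. 0) \<le> y \<and> y \<le> x \<longrightarrow> y \<in> S)"

definition diam_n :: "nat \<Rightarrow> (nat \<Rightarrow> real) set \<Rightarrow> real" where
  "diam_n n S = Sup {norm_n n (vsub x y) | x y. x \<in> S \<and> y \<in> S}"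

definition has_gradient_on :: "nat \<Rightarrow> ((nat \<Rightarrow> real) \<Rightarrow> real) \<Rightarrow> ((nat \<Rightarrow> real) \<Rightarrow> (nat \<Rightarrow> real))
     \<Rightarrow> (nat \<Rightarrow> real) set \<Rightarrow> bool" where
  "has_gradient_on n f g S \<longleftrightarrow> (\<forall>x\<in>S. g x \<in> Rn n \<and> (\<forall>e>0. \<exists>d>0. \<forall>y\<in>S.
      norm_n n (vsub y x) < d \<longrightarrow>
      \<bar>f y - f x - inner_n n (g x) (vsub y x)\<bar> \<le> e * norm_n n (vsub y x)))"

definition dr_submodular_on :: "nat \<Rightarrow> ((nat \<Rightarrow> real) \<Rightarrow> real) \<Rightarrow> (nat \<Rightarrow> real) set \<Rightarrow> bool" where
  "dr_submodular_on n f S \<longleftrightarrow> (\<forall>a\<in>S. \<forall>b\<in>S. \<forall>i<n. \<forall>k::real.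
      a \<le> b \<and> 0 \<le> k \<and> vadd a (vscale k (unitv i)) \<in> S \<and> vadd b (vscale k (unitv i)) \<in> S \<longrightarrow>
      f (vadd a (vscale k (unitv i))) - f a \<ge> f (vadd b (vscale k (unitv i))) - f b)"

definition nmfw_run :: "nat \<Rightarrow> ((nat \<Rightarrow> real) \<Rightarrow> (nat \<Rightarrow> real)) \<Rightarrow> (nat \<Rightarrow> real) set
    \<Rightarrow> (nat \<Rightarrow> real) \<Rightarrow> real \<Rightarrow> nat \<Rightarrow> (nat \<Rightarrow> nat \<Rightarrow> real) \<Rightarrow> (nat \<Rightarrow> real)
    \<Rightarrow> (nat \<Rightarrow> nat \<Rightarrow> real) \<Rightarrow> bool" where
  "nmfw_run n g P u \<gamma> K x t v \<longleftrightarrow>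
     x 0 = (\<lambda>_. 0) \<and> t 0 = 0 \<and> \<not> (t K < 1) \<and>
     (\<forall>k<K. t k < 1 \<and>
        v k \<in> P \<and> v k \<le> vsub u (x k) \<and>
        (\<forall>w\<in>P. w \<le> vsub u (x k) \<longrightarrow> inner_n n w (g (x k)) \<le> inner_n n (v k) (g (x k))) \<and>
        x (Suc k) = vadd (x k) (vscale (min \<gamma> (1 - t k)) (v k)) \<and>
        t (Suc k) = t k + min \<gamma> (1 - t k))"

end

theory Submission
  imports Defs
begin

text \<open>DR-submodularity makes the gradient coordinatewise antitone (on the upper face of the box
  this also needs the Lipschitz continuity of the gradient), so f is concave along nonnegative
  directions.  The iterates satisfy x_j \<le> (1 - (1 - \<gamma>)^j) u, so concavity and nonnegativity give
  f(max(x*, x_j)) \<ge> (1 - \<gamma>)^j f(x*); the direction max(x*, x_j) - x_j is feasible for the linear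
  subproblem, and the descent lemma for L-smooth functions yields
    f(x_(j+1)) \<ge> (1 - \<gamma>) f(x_j) + \<gamma> (1 - \<gamma>)^j f(x*) - L D^2 \<gamma>^2 / 2.
  Unrolling gives f(x_j) \<ge> j\<gamma> (1 - \<gamma>)^(j-1) f(x*) - j L D^2 \<gamma>^2 / 2, and
  j\<gamma> (1 - \<gamma>)^(j-1) \<ge> t e^(-t) for t = j\<gamma>.  The truncated last step, and step sizes \<gamma> > 1/2,
  cost at most 4 \<gamma>^2 f(x*), so C = 4 works.\<close>

lemma norm_n_nonneg: "0 \<le> norm_n n x"
  unfolding norm_n_def by (simp add: sum_nonneg)

lemma norm_n_scale: "norm_n n (\<lambda>i. c * x i) = \<bar>c\<bar> * norm_n n x"
proof -
  have "(\<Sum>i<n. (c * x i)\<^sup>2) = c\<^sup>2 * (\<Sum>i<n. (x i)\<^sup>2)"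
    by (simp add: sum_distrib_left power_mult_distrib)
  then show ?thesis unfolding norm_n_def by (simp add: real_sqrt_mult)
qed

lemma inner_n_scale_right: "inner_n n y (\<lambda>i. c * x i) = c * inner_n n y x"
  unfolding inner_n_def by (simp add: sum_distrib_left algebra_simps)

lemma inner_n_commute: "inner_n n x y = inner_n n y x"
  unfolding inner_n_def by (simp add: mult.commute)

lemma inner_n_diff_left: "inner_n n (vsub x y) z = inner_n n x z - inner_n n y z"
  unfolding inner_n_def vsub_def by (simp add: sum_subtractf algebra_simps)

lemma abs_le_norm_n: "i < n \<Longrightarrow> \<bar>x i\<bar> \<le> norm_n n x"
proof -
  assume "i < n"
  then have "(x i)\<^sup>2 \<le> (\<Sum>j<n. (x j)\<^sup>2)"
    by (intro member_le_sum) auto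
  then show ?thesis
    unfolding norm_n_def by (metis real_sqrt_abs real_sqrt_le_mono)
qed

lemma abs_inner_n_le_norm_n_mult: "\<bar>inner_n n x y\<bar> \<le> norm_n n x * norm_n n y"
proof -
  have "\<bar>inner_n n x y\<bar> \<le> (\<Sum>i<n. \<bar>x i\<bar> * \<bar>y i\<bar>)"
    unfolding inner_n_def abs_mult[symmetric] by (rule sum_abs)
  also have "\<dots> \<le> L2_set x {..<n} * L2_set y {..<n}"
    by (rule L2_set_mult_ineq)
  finally show ?thesis unfolding norm_n_def L2_set_def .
qed

lemma norm_n_scale_unitv: "i < n \<Longrightarrow> norm_n n (vscale k (unitv i)) = \<bar>k\<bar>"
proof -
  assume "i < n"
  have "(\<Sum>j<n. (vscale k (unitv i) j)\<^sup>2) = (\<Sum>j<n. if j = i then k\<^sup>2 else 0)"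
    by (rule sum.cong) (auto simp: vscale_def unitv_def)
  then show ?thesis unfolding norm_n_def using \<open>i < n\<close> by simp
qed

lemma inner_n_scale_unitv: "i < n \<Longrightarrow> inner_n n y (vscale k (unitv i)) = k * y i"
  unfolding inner_n_def vscale_def unitv_def by (simp add: if_distrib cong: if_cong)

lemma mem_box0_iff: "x \<in> box0 u \<longleftrightarrow> (\<forall>i. 0 \<le> x i \<and> x i \<le> u i)"
  unfolding box0_def le_fun_def by auto

lemma segment_mem_box0:
  assumes "y \<in> box0 u" and "(\<lambda>i. y i + d i) \<in> box0 u" and "\<forall>i. 0 \<le> d i"
    and "0 \<le> s" and "s \<le> 1"
  shows "(\<lambda>i. y i + s * d i) \<in> box0 u"
proof -
  have "0 \<le> s * d i" "s * d i \<le> d i" for i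
    using assms(3-5) mult_left_le_one_le[of "d i" s] by auto
  then show ?thesis
    using assms(1,2) unfolding mem_box0_iff by (metis add_increasing2 add_left_mono order_trans)
qed

lemma mvt_real_derivative_within:
  fixes \<phi> :: "real \<Rightarrow> real"
  assumes "a < b" and "\<And>s. s \<in> {a..b} \<Longrightarrow> (\<phi> has_real_derivative \<phi>' s) (at s within {a..b})"
  shows "\<exists>\<xi>\<in>{a<..<b}. \<phi> b - \<phi> a = \<phi>' \<xi> * (b - a)"
  using mvt_simple[OF assms(1), of \<phi> "\<lambda>s h. \<phi>' s * h"] assms(2)
  by (simp add: has_field_derivative_def)

lemma has_gradient_onD:
  assumes "has_gradient_on n f g B" and "x \<in> B" and "e > 0"
  obtains d where "d > 0" and "\<And>y. y \<in> B \<Longrightarrow> norm_n n (vsub y x) < d \<Longrightarrow>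
      \<bar>f y - f x - inner_n n (g x) (vsub y x)\<bar> \<le> e * norm_n n (vsub y x)"
  using assms unfolding has_gradient_on_def by blast

lemma has_gradient_on_segment_derivative:
  assumes grad: "has_gradient_on n f g B"
    and segment: "\<And>s. s \<in> S \<Longrightarrow> (\<lambda>i. y i + s * d i) \<in> B" and "s \<in> S"
  shows "((\<lambda>s. f (\<lambda>i. y i + s * d i)) has_real_derivative inner_n n (g (\<lambda>i. y i + s * d i)) d)
    (at s within S)"
proof -
  define p where "p = (\<lambda>s. (\<lambda>i. y i + s * d i))"
  define N where "N = norm_n n d"
  have N0: "N \<ge> 0" unfolding N_def by (rule norm_n_nonneg)
  have p_diff: "vsub (p s') (p s) = (\<lambda>i. (s' - s) * d i)" for s'
    unfolding vsub_def p_def by (auto simp: algebra_simps)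
  have "((\<lambda>s'. (f (p s') - f (p s)) / (s' - s)) \<longlongrightarrow> inner_n n (g (p s)) d) (at s within S)"
    unfolding tendsto_iff eventually_at
  proof (intro allI impI)
    fix e :: real assume "e > 0"
    then have "e / (N + 1) > 0" using N0 by simp
    moreover have "p s \<in> B" using segment[OF \<open>s \<in> S\<close>] unfolding p_def .
    ultimately obtain r where "r > 0" and r: "\<And>z. z \<in> B \<Longrightarrow> norm_n n (vsub z (p s)) < r \<Longrightarrow>
      \<bar>f z - f (p s) - inner_n n (g (p s)) (vsub z (p s))\<bar> \<le> e / (N + 1) * norm_n n (vsub z (p s))"
      using has_gradient_onD[OF grad] by blast
    show "\<exists>r'>0. \<forall>s'\<in>S. s' \<noteq> s \<and> dist s' s < r' \<longrightarrow>
        dist ((f (p s') - f (p s)) / (s' - s)) (inner_n n (g (p s)) d) < e"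
    proof (intro exI[of _ "r / (N + 1)"] conjI ballI impI)
      show "r / (N + 1) > 0" using \<open>r > 0\<close> N0 by simp
      fix s' assume "s' \<in> S" and s': "s' \<noteq> s \<and> dist s' s < r / (N + 1)"
      define h where "h = s' - s"
      have h0: "\<bar>h\<bar> > 0" using s' unfolding h_def by simp
      have "\<bar>h\<bar> * N \<le> \<bar>h\<bar> * (N + 1)" by (simp add: mult_left_mono)
      also have "\<bar>h\<bar> * (N + 1) < r"
        using s' N0 unfolding h_def dist_real_def by (simp add: pos_less_divide_eq)
      finally have "norm_n n (vsub (p s') (p s)) < r"
        unfolding p_diff norm_n_scale h_def N_def .
      moreover have "p s' \<in> B" using segment[OF \<open>s' \<in> S\<close>] unfolding p_def .
      ultimately have "\<bar>f (p s') - f (p s) - inner_n n (g (p s)) (vsub (p s') (p s))\<bar>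
          \<le> e / (N + 1) * norm_n n (vsub (p s') (p s))"
        using r by blast
      then have "\<bar>f (p s') - f (p s) - h * inner_n n (g (p s)) d\<bar> \<le> e / (N + 1) * (\<bar>h\<bar> * N)"
        unfolding p_diff inner_n_scale_right norm_n_scale h_def N_def .
      then have "\<bar>(f (p s') - f (p s)) / h - inner_n n (g (p s)) d\<bar> \<le> e / (N + 1) * N"
        using h0 by (simp add: field_simps abs_divide)
      also have "\<dots> < e" using \<open>e > 0\<close> N0 by (simp add: field_simps)
      finally show "dist ((f (p s') - f (p s)) / (s' - s)) (inner_n n (g (p s)) d) < e"
        unfolding dist_real_def h_def .
    qed
  qed
  then show ?thesis unfolding has_field_derivative_iff p_def by simp
qed

lemma dr_submodular_gradient_antitone_interior:
  assumes grad: "has_gradient_on n f g (box0 u)" and dr: "dr_submodular_on n f (box0 u)"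
    and a: "a \<in> box0 u" and b: "b \<in> box0 u" and "a \<le> b" and i: "i < n" and "b i < u i"
  shows "g b i \<le> g a i"
proof (rule ccontr)
  assume "\<not> g b i \<le> g a i"
  define \<delta> where "\<delta> = g b i - g a i"
  have "\<delta> > 0" using \<open>\<not> g b i \<le> g a i\<close> unfolding \<delta>_def by simp
  then obtain ra rb where "ra > 0" "rb > 0"
    and near_a: "\<And>z. z \<in> box0 u \<Longrightarrow> norm_n n (vsub z a) < ra \<Longrightarrow>
      \<bar>f z - f a - inner_n n (g a) (vsub z a)\<bar> \<le> \<delta>/4 * norm_n n (vsub z a)"
    and near_b: "\<And>z. z \<in> box0 u \<Longrightarrow> norm_n n (vsub z b) < rb \<Longrightarrow>
      \<bar>f z - f b - inner_n n (g b) (vsub z b)\<bar> \<le> \<delta>/4 * norm_n n (vsub z b)"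
    using has_gradient_onD[OF grad a, of "\<delta>/4"] has_gradient_onD[OF grad b, of "\<delta>/4"]
    by (metis divide_pos_pos zero_less_numeral)
  define k where "k = min (min ra rb / 2) (u i - b i)"
  have "k > 0" "k < ra" "k < rb" "b i + k \<le> u i"
    using \<open>ra > 0\<close> \<open>rb > 0\<close> \<open>b i < u i\<close> unfolding k_def by auto
  define e where "e = vscale k (unitv i)"
  have "a i \<le> b i" using \<open>a \<le> b\<close> by (simp add: le_fun_def)
  then have a': "vadd a e \<in> box0 u" and b': "vadd b e \<in> box0 u"
    using a b \<open>b i + k \<le> u i\<close> \<open>k > 0\<close> unfolding mem_box0_iff e_def
    by (auto simp: vadd_def vscale_def unitv_def)
  have "vsub (vadd a e) a = e" "vsub (vadd b e) b = e"
    by (auto simp: vsub_def vadd_def)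
  moreover have "norm_n n e = k" "inner_n n (g a) e = k * g a i" "inner_n n (g b) e = k * g b i"
    unfolding e_def using norm_n_scale_unitv[OF i] inner_n_scale_unitv[OF i] \<open>k > 0\<close> by auto
  ultimately have "\<bar>f (vadd a e) - f a - k * g a i\<bar> \<le> \<delta>/4 * k"
    and "\<bar>f (vadd b e) - f b - k * g b i\<bar> \<le> \<delta>/4 * k"
    using near_a[OF a'] near_b[OF b'] \<open>k < ra\<close> \<open>k < rb\<close> by auto
  moreover have "f (vadd a e) - f a \<ge> f (vadd b e) - f b"
    using dr a b a' b' \<open>a \<le> b\<close> i \<open>k > 0\<close> unfolding dr_submodular_on_def e_def by auto
  moreover have "k * g b i - k * g a i = k * \<delta>" "k * \<delta> > 0" "\<delta>/4 * k = k * \<delta> / 4"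
    using \<open>k > 0\<close> \<open>\<delta> > 0\<close> unfolding \<delta>_def by (simp_all add: algebra_simps)
  ultimately show False unfolding abs_le_iff by linarith
qed

locale smooth_dr_submodular =
  fixes n :: nat and u :: "nat \<Rightarrow> real" and f :: "(nat \<Rightarrow> real) \<Rightarrow> real"
    and g :: "(nat \<Rightarrow> real) \<Rightarrow> nat \<Rightarrow> real" and L :: real
  assumes u_pos: "\<forall>i<n. u i > 0"
    and gradient: "has_gradient_on n f g (box0 u)"
    and nonneg: "\<forall>y\<in>box0 u. f y \<ge> 0"
    and dr_submodular: "dr_submodular_on n f (box0 u)"
    and gradient_lipschitz:
      "\<forall>y\<in>box0 u. \<forall>z\<in>box0 u. norm_n n (vsub (g y) (g z)) \<le> L * norm_n n (vsub y z)"
begin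

lemma gradient_coordinate_lipschitz:
  assumes "y \<in> box0 u" "z \<in> box0 u" "i < n"
  shows "\<bar>g y i - g z i\<bar> \<le> L * norm_n n (vsub y z)"
  using abs_le_norm_n[OF assms(3), of "vsub (g y) (g z)"] gradient_lipschitz assms(1,2)
  unfolding vsub_def by fastforce

text \<open>On the upper face b i = u i the direct argument has no room to move up; shrink the
  i-th coordinates of a and b by a factor 1 - \<epsilon> and use the Lipschitz continuity of g.\<close>

lemma gradient_antitone:
  assumes a: "a \<in> box0 u" and b: "b \<in> box0 u" and "a \<le> b" and i: "i < n"
  shows "g b i \<le> g a i"
proof (rule ccontr)
  assume "\<not> g b i \<le> g a i"
  define \<delta> where "\<delta> = g b i - g a i"
  have "\<delta> > 0" using \<open>\<not> g b i \<le> g a i\<close> unfolding \<delta>_def by simp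
  have "u i > 0" using u_pos i by simp
  define M where "M = 4 * (\<bar>L\<bar> + 1) * (u i + 1)"
  have "M > 0" unfolding M_def using \<open>u i > 0\<close> by (simp add: add_pos_nonneg)
  define \<epsilon> where "\<epsilon> = min 1 (\<delta> / M)"
  have "\<epsilon> > 0" "\<epsilon> \<le> 1" "\<epsilon> * M \<le> \<delta>"
    unfolding \<epsilon>_def using \<open>\<delta> > 0\<close> \<open>M > 0\<close> by (auto simp: min_def pos_le_divide_eq)
  define shrink where "shrink c = c(i := (1 - \<epsilon>) * c i)" for c :: "nat \<Rightarrow> real"
  have shrink_box: "shrink c \<in> box0 u" if "c \<in> box0 u" for c
    using that \<open>\<epsilon> > 0\<close> \<open>\<epsilon> \<le> 1\<close> mult_left_le_one_le[of "c i" "1 - \<epsilon>"]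
    unfolding shrink_def mem_box0_iff by (auto intro: order_trans)
  have close: "\<bar>g (shrink c) i - g c i\<bar> \<le> \<delta> / 4" if c: "c \<in> box0 u" for c
  proof -
    have ci: "0 \<le> c i" "c i \<le> u i" using c mem_box0_iff by auto
    have "vsub (shrink c) c = vscale (- (\<epsilon> * c i)) (unitv i)"
      unfolding shrink_def by (auto simp: vsub_def vscale_def unitv_def algebra_simps)
    then have dist: "norm_n n (vsub (shrink c) c) = \<epsilon> * c i"
      using norm_n_scale_unitv[OF i] \<open>\<epsilon> > 0\<close> ci by simp
    have "\<bar>g (shrink c) i - g c i\<bar> \<le> L * (\<epsilon> * c i)"
      using gradient_coordinate_lipschitz[OF shrink_box[OF c] c i] unfolding dist .
    also have "\<dots> \<le> (\<bar>L\<bar> + 1) * (\<epsilon> * (u i + 1))"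
      using \<open>\<epsilon> > 0\<close> ci by (intro mult_mono) auto
    also have "\<dots> = \<epsilon> * M / 4" unfolding M_def by (simp add: algebra_simps)
    finally show ?thesis using \<open>\<epsilon> * M \<le> \<delta>\<close> by simp
  qed
  have "a i \<le> b i" using \<open>a \<le> b\<close> by (simp add: le_fun_def)
  then have "shrink a \<le> shrink b"
    using \<open>a \<le> b\<close> \<open>\<epsilon> \<le> 1\<close> unfolding shrink_def le_fun_def by (auto intro: mult_left_mono)
  moreover have "shrink b i < u i"
  proof (cases "b i = 0")
    case False
    then have "b i > 0" using b by (simp add: mem_box0_iff order_le_neq_trans)
    then have "(1 - \<epsilon>) * b i < b i" using \<open>\<epsilon> > 0\<close> by (simp add: algebra_simps)
    then show ?thesis using b unfolding shrink_def mem_box0_iff by (metis fun_upd_same order_less_le_trans)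
  qed (simp add: shrink_def \<open>u i > 0\<close>)
  ultimately have "g (shrink b) i \<le> g (shrink a) i"
    using dr_submodular_gradient_antitone_interior[OF gradient dr_submodular] shrink_box a b i
    by blast
  then show False
    using close[OF a] close[OF b] \<open>\<delta> > 0\<close> \<delta>_def unfolding abs_le_iff by (elim conjE) linarith
qed

lemma inner_gradient_antitone:
  assumes "y \<in> box0 u" "z \<in> box0 u" "y \<le> z" "\<forall>i. 0 \<le> d i"
  shows "inner_n n (g z) d \<le> inner_n n (g y) d"
  unfolding inner_n_def
  using gradient_antitone[OF assms(1-3)] assms(4) by (intro sum_mono mult_right_mono) auto

lemma segment_derivative:
  assumes "y \<in> box0 u" and "(\<lambda>i. y i + d i) \<in> box0 u" and "\<forall>i. 0 \<le> d i" and "s \<in> {0..1}"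
  shows "((\<lambda>s. f (\<lambda>i. y i + s * d i)) has_real_derivative inner_n n (g (\<lambda>i. y i + s * d i)) d)
    (at s within {0..1})"
  using segment_mem_box0[OF assms(1-3)] assms(4)
  by (intro has_gradient_on_segment_derivative[OF gradient]) auto

lemma increment_le_inner_gradient:
  assumes y: "y \<in> box0 u" and yd: "(\<lambda>i. y i + d i) \<in> box0 u" and d: "\<forall>i. 0 \<le> d i"
  shows "f (\<lambda>i. y i + d i) - f y \<le> inner_n n (g y) d"
proof -
  define p where "p = (\<lambda>s. (\<lambda>i. y i + s * d i))"
  obtain \<xi> where \<xi>: "\<xi> \<in> {0<..<1}" and "f (p 1) - f (p 0) = inner_n n (g (p \<xi>)) d * (1 - 0)"
    using mvt_real_derivative_within[of 0 1 "\<lambda>s. f (p s)" "\<lambda>s. inner_n n (g (p s)) d"]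
      segment_derivative[OF y yd d] unfolding p_def by auto
  moreover have "p 1 = (\<lambda>i. y i + d i)" and "p 0 = y" unfolding p_def by auto
  moreover have "p \<xi> \<in> box0 u" and "y \<le> p \<xi>"
    using segment_mem_box0[OF y yd d] \<xi> d unfolding p_def le_fun_def by auto
  ultimately show ?thesis using inner_gradient_antitone[OF y _ _ d] by fastforce
qed

text \<open>The antitone gradient makes the slope of f along the segment on [\<theta>, 1] at most the
  slope on [0, \<theta>]; nonnegativity of f at the far end does the rest.\<close>

lemma scaled_f_le_f_segment:
  assumes z: "z \<in> box0 u" and zd: "(\<lambda>i. z i + d i) \<in> box0 u" and d: "\<forall>i. 0 \<le> d i"
    and \<theta>: "0 < \<theta>" "\<theta> < 1"
  shows "(1 - \<theta>) * f z \<le> f (\<lambda>i. z i + \<theta> * d i)"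
proof -
  define p where "p = (\<lambda>s. (\<lambda>i. z i + s * d i))"
  define \<phi>' where "\<phi>' = (\<lambda>s. inner_n n (g (p s)) d)"
  have der: "((\<lambda>s. f (p s)) has_real_derivative \<phi>' s) (at s within T)"
    if "T \<subseteq> {0..1}" "s \<in> T" for s T
    using DERIV_subset[OF segment_derivative[OF z zd d] that(1)] that
    unfolding \<phi>'_def p_def by auto
  obtain \<xi>1 where \<xi>1: "\<xi>1 \<in> {0<..<\<theta>}" and E1: "f (p \<theta>) - f (p 0) = \<phi>' \<xi>1 * (\<theta> - 0)"
    using mvt_real_derivative_within[OF \<theta>(1) der] \<theta> by auto
  obtain \<xi>2 where \<xi>2: "\<xi>2 \<in> {\<theta><..<1}" and E2: "f (p 1) - f (p \<theta>) = \<phi>' \<xi>2 * (1 - \<theta>)"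
    using mvt_real_derivative_within[OF \<theta>(2) der] \<theta> by auto
  have p_box: "p s \<in> box0 u" if "0 \<le> s" "s \<le> 1" for s
    using segment_mem_box0[OF z zd d that] unfolding p_def .
  have "p \<xi>1 \<le> p \<xi>2"
    unfolding p_def le_fun_def using \<xi>1 \<xi>2 d by (auto intro!: mult_right_mono)
  then have "\<phi>' \<xi>2 \<le> \<phi>' \<xi>1"
    unfolding \<phi>'_def using inner_gradient_antitone[OF p_box p_box _ d] \<xi>1 \<xi>2 \<theta> by auto
  then have "\<phi>' \<xi>2 * (1 - \<theta>) \<le> \<phi>' \<xi>1 * (1 - \<theta>)" using \<theta> by (intro mult_right_mono) auto
  then have "f (p 1) \<le> f (p 0) + \<phi>' \<xi>1 * \<theta> + \<phi>' \<xi>1 * (1 - \<theta>)" using E1 E2 by simp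
  also have "\<dots> = f (p 0) + \<phi>' \<xi>1" by (simp add: algebra_simps)
  finally have "0 \<le> \<theta> * (f (p 0) + \<phi>' \<xi>1)"
    using p_box[of 1] nonneg \<theta> by auto
  then have "(1 - \<theta>) * f (p 0) \<le> f (p \<theta>)" using E1 by (simp add: algebra_simps)
  then show ?thesis unfolding p_def by simp
qed

lemma scaled_f_le_f_max:
  assumes z: "z \<in> box0 u" and y: "y \<in> box0 u" and c: "0 \<le> c" "c \<le> 1"
    and y_le: "\<forall>i. y i \<le> (1 - c) * u i"
  shows "c * f z \<le> f (\<lambda>i. max (z i) (y i))"
proof -
  have zi: "0 \<le> z i" "z i \<le> u i" and yi: "0 \<le> y i" "y i \<le> u i" for i
    using z y mem_box0_iff by auto
  consider "c = 0" | "c = 1" | "0 < c \<and> c < 1" using c by linarith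
  then show ?thesis
  proof cases
    case 1
    have "(\<lambda>i. max (z i) (y i)) \<in> box0 u"
      unfolding mem_box0_iff using zi yi by (simp add: le_max_iff_disj)
    then show ?thesis using 1 nonneg by simp
  next
    case 2
    then have "max (z i) (y i) = z i" for i
      using y_le zi(1)[of i] by (metis diff_self max.absorb1 mult_zero_left order_trans)
    then have "(\<lambda>i. max (z i) (y i)) = z" by simp
    then show ?thesis using 2 by simp
  next
    case 3
    define \<theta> where "\<theta> = 1 - c"
    have \<theta>: "0 < \<theta>" "\<theta> < 1" using 3 unfolding \<theta>_def by auto
    define d where "d = (\<lambda>i. (max (z i) (y i) - z i) / \<theta>)"
    have d: "\<forall>i. 0 \<le> d i" unfolding d_def using \<theta> by auto
    have "(\<lambda>i. z i + d i) \<in> box0 u" unfolding mem_box0_iff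
    proof
      fix i
      have "z i + d i \<le> u i"
      proof (cases "y i \<le> z i")
        case True then show ?thesis using zi unfolding d_def by simp
      next
        case False
        have "0 \<le> c * z i" using 3 zi(1)[of i] by simp
        then have "y i - z i \<le> \<theta> * (u i - z i)"
          using y_le[rule_format, of i] unfolding \<theta>_def by (simp add: algebra_simps)
        then have "(y i - z i) / \<theta> \<le> u i - z i"
          using \<theta> by (simp add: pos_divide_le_eq mult.commute)
        then show ?thesis using False unfolding d_def by simp
      qed
      then show "0 \<le> z i + d i \<and> z i + d i \<le> u i" using zi d by (meson add_nonneg_nonneg)
    qed
    moreover have "(\<lambda>i. z i + \<theta> * d i) = (\<lambda>i. max (z i) (y i))" unfolding d_def using \<theta> by auto
    ultimately show ?thesis using scaled_f_le_f_segment[OF z _ d \<theta>] unfolding \<theta>_def by simp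
  qed
qed

lemma smooth_lower_bound:
  assumes y: "y \<in> box0 u" and yd: "(\<lambda>i. y i + d i) \<in> box0 u" and d: "\<forall>i. 0 \<le> d i"
  shows "f y + inner_n n (g y) d - L * (norm_n n d)\<^sup>2 / 2 \<le> f (\<lambda>i. y i + d i)"
proof -
  define p where "p = (\<lambda>s. (\<lambda>i. y i + s * d i))"
  define N where "N = norm_n n d"
  define h where "h = (\<lambda>s. f (p s) - s * inner_n n (g y) d + L * s\<^sup>2 * N\<^sup>2 / 2)"
  define h' where "h' = (\<lambda>s. inner_n n (vsub (g (p s)) (g y)) d + L * s * N\<^sup>2)"
  have "(h has_real_derivative h' s) (at s within {0..1})" if "s \<in> {0..1}" for s
  proof -
    have f_deriv: "((\<lambda>s. f (p s)) has_real_derivative inner_n n (g (p s)) d) (at s within {0..1})"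
      using segment_derivative[OF y yd d that] unfolding p_def .
    show ?thesis unfolding h_def h'_def inner_n_diff_left
      by (rule derivative_eq_intros f_deriv | simp)+
  qed
  then obtain \<xi> where \<xi>: "\<xi> \<in> {0<..<1}" and "h 1 - h 0 = h' \<xi> * (1 - 0)"
    using mvt_real_derivative_within[of 0 1 h h'] by auto
  moreover have "0 \<le> h' \<xi>"
  proof -
    have p_box: "p \<xi> \<in> box0 u" using segment_mem_box0[OF y yd d] \<xi> unfolding p_def by auto
    have "vsub (p \<xi>) y = (\<lambda>i. \<xi> * d i)" unfolding p_def vsub_def by auto
    then have dist: "norm_n n (vsub (p \<xi>) y) = \<xi> * N" using \<xi> by (simp add: norm_n_scale N_def)
    have "- inner_n n (vsub (g (p \<xi>)) (g y)) d \<le> norm_n n (vsub (g (p \<xi>)) (g y)) * N"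
      using abs_inner_n_le_norm_n_mult[of n "vsub (g (p \<xi>)) (g y)" d] unfolding N_def by linarith
    also have "\<dots> \<le> L * (\<xi> * N) * N"
      using gradient_lipschitz p_box y dist norm_n_nonneg[of n d] unfolding N_def
      by (metis mult_right_mono)
    finally show ?thesis unfolding h'_def by (simp add: power2_eq_square algebra_simps)
  qed
  moreover have "p 1 = (\<lambda>i. y i + d i)" "p 0 = y" unfolding p_def by auto
  ultimately show ?thesis unfolding h_def N_def by simp
qed

end

lemma exp_le_one_minus_power:
  fixes \<gamma> :: real
  assumes "0 \<le> \<gamma>" "\<gamma> < 1"
  shows "exp (- (real j * \<gamma> / (1 - \<gamma>))) \<le> (1 - \<gamma>) ^ j"
proof -
  have "1 / (1 - \<gamma>) = 1 + \<gamma> / (1 - \<gamma>)" using assms by (simp add: field_simps)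
  also have "\<dots> \<le> exp (\<gamma> / (1 - \<gamma>))" by (rule exp_ge_add_one_self)
  finally have "inverse (exp (\<gamma> / (1 - \<gamma>))) \<le> inverse (1 / (1 - \<gamma>))"
    using assms by (intro le_imp_inverse_le) auto
  then have "exp (- (\<gamma> / (1 - \<gamma>))) \<le> 1 - \<gamma>" by (simp add: exp_minus)
  then have "exp (- (\<gamma> / (1 - \<gamma>))) ^ j \<le> (1 - \<gamma>) ^ j" by (simp add: power_mono)
  then show ?thesis by (simp add: exp_of_nat_mult[symmetric])
qed

lemma exp_le_one_minus_power_pred:
  fixes \<gamma> :: real
  assumes "0 \<le> \<gamma>" "\<gamma> < 1" "real k * \<gamma> \<le> 1"
  shows "exp (- (real k * \<gamma>)) \<le> (1 - \<gamma>) ^ (k - 1)"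
proof -
  have "real k * \<gamma> * \<gamma> \<le> \<gamma>" using assms by (simp add: mult_left_le_one_le)
  then have "real (k - 1) * \<gamma> \<le> real k * \<gamma> * (1 - \<gamma>)"
    by (cases k) (simp_all add: algebra_simps)
  then have "real (k - 1) * \<gamma> / (1 - \<gamma>) \<le> real k * \<gamma>"
    using assms by (simp add: pos_divide_le_eq)
  then have "exp (- (real k * \<gamma>)) \<le> exp (- (real (k - 1) * \<gamma> / (1 - \<gamma>)))" by simp
  also have "\<dots> \<le> (1 - \<gamma>) ^ (k - 1)" by (rule exp_le_one_minus_power[OF assms(1,2)])
  finally show ?thesis .
qed

lemma recursion_lower_bound:
  fixes a :: "nat \<Rightarrow> real"
  assumes "0 \<le> a 0" "0 \<le> \<gamma>" "\<gamma> \<le> 1" "0 \<le> E"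
    and step: "\<And>j. Suc j < N \<Longrightarrow> (1 - \<gamma>) * a j + \<gamma> * ((1 - \<gamma>) ^ j * F) - E \<le> a (Suc j)"
    and "j < N"
  shows "real j * \<gamma> * (1 - \<gamma>) ^ (j - 1) * F - real j * E \<le> a j"
  using \<open>j < N\<close>
proof (induction j)
  case 0
  then show ?case using assms(1) by simp
next
  case (Suc j)
  then have "real j * \<gamma> * (1 - \<gamma>) ^ (j - 1) * F - real j * E \<le> a j" by simp
  then have "(1 - \<gamma>) * (real j * \<gamma> * (1 - \<gamma>) ^ (j - 1) * F - real j * E) \<le> (1 - \<gamma>) * a j"
    using assms(3) by (intro mult_left_mono) auto
  moreover have "(1 - \<gamma>) * (real j * \<gamma> * (1 - \<gamma>) ^ (j - 1) * F - real j * E)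
      = real j * (\<gamma> * ((1 - \<gamma>) ^ j * F)) - (1 - \<gamma>) * (real j * E)"
    by (cases j) (simp_all add: algebra_simps)
  moreover have "(1 - \<gamma>) * (real j * E) \<le> real j * E"
    using assms(2-4) mult_left_le_one_le[of "real j * E" "1 - \<gamma>"] by simp
  moreover have "real (Suc j) * \<gamma> * (1 - \<gamma>) ^ (Suc j - 1) * F - real (Suc j) * E
      = real j * (\<gamma> * ((1 - \<gamma>) ^ j * F)) + \<gamma> * ((1 - \<gamma>) ^ j * F) - real j * E - E"
    by (simp add: algebra_simps)
  ultimately show ?case using step[OF Suc.prems] by linarith
qed

text \<open>The truncated last step: after m full steps the final step has length
  \<delta> = 1 - m\<gamma> \<le> \<gamma>, and the resulting coefficient of f(x*) is still 1/e up to O(\<gamma>^2).\<close>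

lemma last_step_coefficient_bound:
  fixes \<gamma> \<delta> :: real
  assumes g0: "0 < \<gamma>" and g1: "\<gamma> \<le> 1/2" and m: "m \<ge> 1" and d: "\<delta> = 1 - real m * \<gamma>"
    and d0: "0 < \<delta>" and dg: "\<delta> \<le> \<gamma>"
  shows "exp (-1) - 4 * \<gamma>\<^sup>2 \<le> (1 - \<delta>) * (real m * \<gamma> * (1 - \<gamma>) ^ (m - 1)) + \<delta> * (1 - \<gamma>) ^ m"
proof -
  define P where "P = (1 - \<gamma>) ^ (m - 1)"
  have "\<delta> \<le> \<delta> / (1 - \<gamma>)" using d0 g0 g1 by (simp add: le_divide_eq mult_left_le_one_le)
  moreover have "- ((1 - \<delta> - \<gamma>) / (1 - \<gamma>)) = -1 + \<delta> / (1 - \<gamma>)" using g1 by (simp add: field_simps)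
  ultimately have exponent: "-1 + \<delta> \<le> - ((1 - \<delta> - \<gamma>) / (1 - \<gamma>))" by linarith
  have "exp (-1) * (1 + \<delta>) \<le> exp (-1) * exp \<delta>"
    using exp_ge_add_one_self[of \<delta>] by simp
  also have "\<dots> = exp (-1 + \<delta>)" by (rule exp_add[symmetric])
  also have "\<dots> \<le> exp (- ((1 - \<delta> - \<gamma>) / (1 - \<gamma>)))" using exponent by simp
  also have "\<dots> = exp (- (real (m - 1) * \<gamma> / (1 - \<gamma>)))"
    using m d by (simp add: of_nat_diff algebra_simps)
  also have "\<dots> \<le> P" unfolding P_def using g0 g1 by (intro exp_le_one_minus_power) auto
  finally have P_bound: "exp (-1) * (1 + \<delta>) \<le> P" .
  define R where "R = (1 - \<delta>) * (1 - \<delta>) + \<delta> * (1 - \<gamma>)"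
  have "R \<ge> 0" unfolding R_def using d0 dg g1 by simp
  have "1 - 2 * \<gamma>\<^sup>2 \<le> (1 + \<delta>) * R"
  proof -
    have "\<delta> * \<gamma> \<le> \<gamma> * \<gamma>" using dg g0 by (simp add: mult_right_mono)
    moreover have "\<delta> * \<delta> \<le> \<gamma> * 1" using dg d0 g0 g1 by (intro mult_mono) auto
    then have "\<delta> * \<delta> * \<gamma> \<le> \<gamma> * \<gamma>" using g0 by (simp add: mult_right_mono)
    moreover have "(1 + \<delta>) * R = 1 - \<delta> * \<gamma> + \<delta> * \<delta> * \<delta> - \<delta> * \<delta> * \<gamma>"
      unfolding R_def by (simp add: algebra_simps)
    moreover have "0 \<le> \<delta> * \<delta> * \<delta>" using d0 by simp
    ultimately show ?thesis unfolding power2_eq_square by linarith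
  qed
  then have "exp (-1) * (1 - 2 * \<gamma>\<^sup>2) \<le> exp (-1) * (1 + \<delta>) * R" by simp
  moreover have "exp (-1) * (2 * \<gamma>\<^sup>2) \<le> 1 * (4 * \<gamma>\<^sup>2)" by (intro mult_mono) auto
  ultimately have "exp (-1) - 4 * \<gamma>\<^sup>2 \<le> exp (-1) * (1 + \<delta>) * R" by (simp add: algebra_simps)
  also have "\<dots> \<le> P * R" using P_bound \<open>R \<ge> 0\<close> by (rule mult_right_mono)
  also have "\<dots> = (1 - \<delta>) * (real m * \<gamma> * (1 - \<gamma>) ^ (m - 1)) + \<delta> * (1 - \<gamma>) ^ m"
  proof -
    have pm: "(1 - \<gamma>) ^ m = (1 - \<gamma>) * P" and tau: "real m * \<gamma> = 1 - \<delta>"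
      using m d unfolding P_def by (simp_all add: power_eq_if)
    show ?thesis unfolding pm tau R_def P_def[symmetric] by (simp add: algebra_simps)
  qed
  finally show ?thesis .
qed

locale nmfw_analysis = smooth_dr_submodular +
  fixes P :: "(nat \<Rightarrow> real) set" and D :: real and xs :: "nat \<Rightarrow> real"
    and \<gamma> :: real and K :: nat
    and x :: "nat \<Rightarrow> nat \<Rightarrow> real" and t :: "nat \<Rightarrow> real" and v :: "nat \<Rightarrow> nat \<Rightarrow> real"
  assumes P_nonempty: "P \<noteq> {}" and P_down_closed: "down_closed P" and P_box: "P \<subseteq> box0 u"
    and diam: "D = diam_n n P"
    and xs_mem: "xs \<in> P"
    and step_pos: "0 < \<gamma>" and step_le_one: "\<gamma> \<le> 1"
    and run: "nmfw_run n g P u \<gamma> K x t v"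
begin

definition step_length :: "nat \<Rightarrow> real" where
  "step_length j = min \<gamma> (1 - t j)"

lemma run_start: "x 0 = (\<lambda>_. 0)" "t 0 = 0" "1 \<le> t K"
  using run unfolding nmfw_run_def by auto

lemma run_step:
  assumes "j < K"
  shows "t j < 1" "v j \<in> P" "v j \<le> vsub u (x j)"
    "\<And>w. w \<in> P \<Longrightarrow> w \<le> vsub u (x j) \<Longrightarrow> inner_n n w (g (x j)) \<le> inner_n n (v j) (g (x j))"
    "x (Suc j) = (\<lambda>i. x j i + step_length j * v j i)"
    "t (Suc j) = t j + step_length j"
  using run assms unfolding nmfw_run_def step_length_def vadd_def vscale_def by auto

lemma step_length_bounds: "j < K \<Longrightarrow> 0 < step_length j \<and> step_length j \<le> \<gamma>"
  using run_step(1) step_pos unfolding step_length_def by auto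

lemma time_eq: "j < K \<Longrightarrow> t j = real j * \<gamma>"
proof (induction j)
  case 0
  then show ?case using run_start by simp
next
  case (Suc j)
  then have "t (Suc j) < 1" "j < K" using run_step(1) by auto
  then have "step_length j = \<gamma>"
    using run_step(6)[of j] unfolding step_length_def by (auto simp: min_def split: if_splits)
  then show ?case using Suc run_step(6)[of j] by (simp add: algebra_simps)
qed

lemma step_length_eq: "Suc j < K \<Longrightarrow> step_length j = \<gamma>"
  using run_step(6)[of j] time_eq[of j] time_eq[of "Suc j"] by (simp add: algebra_simps)

lemma time_final: "t K = 1"
proof -
  obtain m where "K = Suc m" using run_start by (cases K) auto
  then show ?thesis
    using run_step(1,6)[of m] run_start(3) unfolding step_length_def by auto
qed

lemma time_bounds: "k \<le> K \<Longrightarrow> 0 \<le> t k \<and> t k \<le> 1"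
proof (cases "k < K")
  case True
  then show ?thesis using time_eq[OF True] run_step(1)[OF True] step_pos by simp
qed (simp add: time_final)

lemma zero_mem_P: "(\<lambda>_. 0) \<in> P"
proof -
  obtain p where "p \<in> P" using P_nonempty by auto
  moreover have "(\<lambda>_. 0) \<le> p" using \<open>p \<in> P\<close> P_box unfolding box0_def by auto
  ultimately show ?thesis using P_down_closed unfolding down_closed_def by auto
qed

lemma iterate_bounds: "j \<le> K \<Longrightarrow> x j \<in> box0 u \<and> (\<forall>i. (1 - \<gamma>) ^ j * u i \<le> u i - x j i)"
proof (induction j)
  case 0
  have "(\<lambda>_. 0) \<in> box0 u" using zero_mem_P P_box by auto
  then show ?case using run_start(1) by (simp add: mem_box0_iff)
next
  case (Suc j)
  then have j: "j < K" and IH: "x j \<in> box0 u" "\<And>i. (1 - \<gamma>) ^ j * u i \<le> u i - x j i" by auto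
  define s where "s = step_length j"
  have s: "0 < s" "s \<le> \<gamma>" using step_length_bounds[OF j] unfolding s_def by auto
  have bound: "0 \<le> x (Suc j) i \<and> (1 - \<gamma>) ^ Suc j * u i \<le> u i - x (Suc j) i" for i
  proof -
    have xi: "0 \<le> x j i" using IH(1) mem_box0_iff by auto
    have vi: "0 \<le> v j i" using run_step(2)[OF j] P_box mem_box0_iff by auto
    have vu: "v j i \<le> u i - x j i" using run_step(3)[OF j] unfolding le_fun_def vsub_def by auto
    have "s * v j i \<le> s * (u i - x j i)" using vu s by (simp add: mult_left_mono)
    moreover have "(1 - \<gamma>) * (u i - x j i) \<le> (1 - s) * (u i - x j i)"
      using s vu vi by (intro mult_right_mono) auto
    moreover have "(1 - \<gamma>) * ((1 - \<gamma>) ^ j * u i) \<le> (1 - \<gamma>) * (u i - x j i)"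
      using IH(2)[of i] step_le_one by (intro mult_left_mono) auto
    moreover have "0 \<le> s * v j i" using s vi by simp
    ultimately show ?thesis using run_step(5)[OF j] xi unfolding s_def by (simp add: algebra_simps)
  qed
  moreover have "0 \<le> (1 - \<gamma>) ^ Suc j * u i" for i
    using step_le_one zero_mem_P P_box by (auto simp: mem_box0_iff)
  ultimately show ?case unfolding mem_box0_iff by (meson diff_ge_0_iff_ge order_trans)
qed

lemma iterate_mem_box0: "j \<le> K \<Longrightarrow> x j \<in> box0 u"
  using iterate_bounds by blast

lemma norm_n_le_diam: "w \<in> P \<Longrightarrow> norm_n n w \<le> D"
proof -
  assume "w \<in> P"
  define S where "S = {norm_n n (vsub a b) | a b. a \<in> P \<and> b \<in> P}"
  have "norm_n n w \<in> S"
    unfolding S_def using \<open>w \<in> P\<close> zero_mem_P by (force simp: vsub_def)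
  moreover have "bdd_above S"
  proof (rule bdd_aboveI)
    fix r assume "r \<in> S"
    then obtain a b where ab: "a \<in> box0 u" "b \<in> box0 u" "r = norm_n n (vsub a b)"
      unfolding S_def using P_box by auto
    have "(vsub a b i)\<^sup>2 \<le> (u i)\<^sup>2" for i
    proof -
      have "0 \<le> a i" "a i \<le> u i" "0 \<le> b i" "b i \<le> u i" using ab(1,2) mem_box0_iff by auto
      then have "a i - b i \<le> \<bar>u i\<bar>" "- (a i - b i) \<le> \<bar>u i\<bar>" using abs_ge_self[of "u i"] by linarith+
      then show ?thesis unfolding vsub_def by (simp add: abs_le_square_iff[symmetric] abs_le_iff)
    qed
    then show "r \<le> sqrt (\<Sum>i<n. (u i)\<^sup>2)" using ab unfolding norm_n_def by (simp add: sum_mono)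
  qed
  ultimately show ?thesis unfolding diam diam_n_def S_def[symmetric] by (rule cSup_upper)
qed

text \<open>For L < 0 the Lipschitz condition forces P = {0}, hence D = 0.\<close>

lemma smoothness_le_diam: "w \<in> P \<Longrightarrow> L * (norm_n n w)\<^sup>2 \<le> L * D\<^sup>2"
proof (cases "L < 0")
  case True
  have collapse: "norm_n n (vsub a b) = 0" if "a \<in> P" "b \<in> P" for a b
  proof -
    have "0 \<le> L * norm_n n (vsub a b)"
      using gradient_lipschitz that P_box norm_n_nonneg by (meson order_trans subsetD)
    then show ?thesis using True norm_n_nonneg[of n "vsub a b"] by (simp add: zero_le_mult_iff)
  qed
  have "{norm_n n (vsub a b) | a b. a \<in> P \<and> b \<in> P} \<noteq> {}" using P_nonempty by blast
  then have "D \<le> 0" unfolding diam diam_n_def using collapse by (intro cSup_least) auto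
  moreover assume "w \<in> P"
  moreover have "norm_n n w = 0" using collapse[OF \<open>w \<in> P\<close> zero_mem_P] by (simp add: vsub_def)
  ultimately have "D = 0" using norm_n_le_diam[of w] by linarith
  then show ?thesis using \<open>norm_n n w = 0\<close> by simp
next
  case False
  assume "w \<in> P"
  then have "(norm_n n w)\<^sup>2 \<le> D\<^sup>2"
    using norm_n_le_diam norm_n_nonneg by (simp add: power_mono)
  then show ?thesis using False by (simp add: mult_left_mono)
qed

lemma smoothness_diam_nonneg: "0 \<le> L * D\<^sup>2"
  using smoothness_le_diam[OF zero_mem_P] by (simp add: norm_n_def)

text \<open>The direction max(x*, x_j) - x_j is feasible for the linear subproblem, and by the
  bound x_j \<le> (1 - (1 - \<gamma>)^j) u it reaches a point where f is at least (1 - \<gamma>)^j f(x*).\<close>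

lemma frank_wolfe_gap:
  assumes j: "j < K"
  shows "(1 - \<gamma>) ^ j * f xs - f (x j) \<le> inner_n n (g (x j)) (v j)"
proof -
  define y where "y = x j"
  define w where "w = (\<lambda>i. max (xs i) (y i) - y i)"
  have y: "y \<in> box0 u" unfolding y_def using iterate_mem_box0 j by simp
  have xs: "xs \<in> box0 u" using xs_mem P_box by auto
  have w_bounds: "0 \<le> w i \<and> w i \<le> xs i" for i
    using y xs unfolding w_def mem_box0_iff by (auto simp: max_def)
  then have "w \<in> P" using P_down_closed xs_mem unfolding down_closed_def le_fun_def by blast
  moreover have "w \<le> vsub u y"
    using y xs unfolding w_def le_fun_def vsub_def mem_box0_iff by (auto simp: max_def)
  ultimately have "inner_n n (g y) w \<le> inner_n n (g y) (v j)"
    using run_step(4)[OF j] unfolding y_def by (simp add: inner_n_commute)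
  moreover have yw: "(\<lambda>i. y i + w i) = (\<lambda>i. max (xs i) (y i))" unfolding w_def by auto
  moreover have "f (\<lambda>i. y i + w i) - f y \<le> inner_n n (g y) w"
    using y xs w_bounds
    by (intro increment_le_inner_gradient) (auto simp: yw mem_box0_iff le_max_iff_disj)
  moreover have "(1 - \<gamma>) ^ j * f xs \<le> f (\<lambda>i. max (xs i) (y i))"
    using iterate_bounds[of j] j step_pos step_le_one unfolding y_def
    by (intro scaled_f_le_f_max[OF xs]) (auto simp: algebra_simps power_le_one)
  ultimately show ?thesis unfolding y_def by simp
qed

lemma one_step_bound:
  assumes j: "j < K"
  shows "(1 - step_length j) * f (x j) + step_length j * ((1 - \<gamma>) ^ j * f xs)
      - L * D\<^sup>2 * \<gamma>\<^sup>2 / 2 \<le> f (x (Suc j))"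
proof -
  define s where "s = step_length j"
  define d where "d = (\<lambda>i. s * v j i)"
  have s: "0 < s" "s \<le> \<gamma>" using step_length_bounds[OF j] unfolding s_def by auto
  have "v j \<in> box0 u" using run_step(2)[OF j] P_box by auto
  then have d: "\<forall>i. 0 \<le> d i" unfolding d_def using s mem_box0_iff by auto
  have step: "x (Suc j) = (\<lambda>i. x j i + d i)" unfolding d_def s_def using run_step(5)[OF j] .
  then have "f (x j) + s * inner_n n (g (x j)) (v j) - L * (s * norm_n n (v j))\<^sup>2 / 2
      \<le> f (x (Suc j))"
    using smooth_lower_bound[OF iterate_mem_box0 _ d, of j] iterate_mem_box0[of "Suc j"] j s
    unfolding d_def by (simp add: inner_n_scale_right norm_n_scale)
  moreover have "s * ((1 - \<gamma>) ^ j * f xs - f (x j)) \<le> s * inner_n n (g (x j)) (v j)"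
    using frank_wolfe_gap[OF j] s by (simp add: mult_left_mono)
  moreover have "L * (s * norm_n n (v j))\<^sup>2 \<le> L * D\<^sup>2 * \<gamma>\<^sup>2"
  proof -
    have "L * (s * norm_n n (v j))\<^sup>2 = s\<^sup>2 * (L * (norm_n n (v j))\<^sup>2)"
      by (simp add: power_mult_distrib)
    also have "\<dots> \<le> s\<^sup>2 * (L * D\<^sup>2)"
      using smoothness_le_diam[OF run_step(2)[OF j]] by (simp add: mult_left_mono)
    also have "\<dots> \<le> \<gamma>\<^sup>2 * (L * D\<^sup>2)"
      using s smoothness_diam_nonneg by (intro mult_right_mono power_mono) auto
    finally show ?thesis by (simp add: mult_ac)
  qed
  ultimately show ?thesis unfolding s_def by (simp add: algebra_simps)
qed

lemma iterate_lower_bound: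
  assumes "j < K"
  shows "real j * \<gamma> * (1 - \<gamma>) ^ (j - 1) * f xs - real j * (L * D\<^sup>2 * \<gamma>\<^sup>2 / 2) \<le> f (x j)"
proof (rule recursion_lower_bound[where N = K])
  show "(1 - \<gamma>) * f (x i) + \<gamma> * ((1 - \<gamma>) ^ i * f xs) - L * D\<^sup>2 * \<gamma>\<^sup>2 / 2 \<le> f (x (Suc i))"
    if "Suc i < K" for i
    using one_step_bound[of i] step_length_eq[OF that] that by simp
qed (use assms nonneg iterate_mem_box0 step_pos step_le_one smoothness_diam_nonneg in auto)

lemma frank_wolfe_bound_large_step:
  assumes "1/2 < \<gamma>" "k \<le> K"
  shows "t k * exp (- t k) * f xs - L * D\<^sup>2 / 2 * real k * \<gamma>\<^sup>2 - 4 * \<gamma>\<^sup>2 * f xs \<le> f (x k)"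
proof -
  have "0 \<le> f xs" "0 \<le> f (x k)" using nonneg xs_mem P_box iterate_mem_box0[OF assms(2)] by auto
  have "t k * exp (- t k) \<le> 1" using time_bounds[OF assms(2)] by (simp add: mult_le_one)
  also have "1 \<le> 4 * \<gamma>\<^sup>2"
    using power_mono[of "1/2" \<gamma> 2] assms(1) by (simp add: power2_eq_square)
  finally have "t k * exp (- t k) * f xs \<le> 4 * \<gamma>\<^sup>2 * f xs"
    using \<open>0 \<le> f xs\<close> by (simp add: mult_right_mono)
  moreover have "0 \<le> L * D\<^sup>2 / 2 * real k * \<gamma>\<^sup>2" using smoothness_diam_nonneg by simp
  ultimately show ?thesis using \<open>0 \<le> f (x k)\<close> by linarith
qed

lemma frank_wolfe_bound_before_last:
  assumes "1 \<le> k" "k < K"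
  shows "t k * exp (- t k) * f xs - L * D\<^sup>2 / 2 * real k * \<gamma>\<^sup>2 \<le> f (x k)"
proof -
  have tk: "t k = real k * \<gamma>" and "real k * \<gamma> < 1"
    using time_eq[OF assms(2)] run_step(1)[OF assms(2)] by auto
  moreover have "\<gamma> \<le> real k * \<gamma>" using assms(1) step_pos by simp
  ultimately have "\<gamma> < 1" by linarith
  then have "exp (- (real k * \<gamma>)) \<le> (1 - \<gamma>) ^ (k - 1)"
    using step_pos \<open>real k * \<gamma> < 1\<close> by (intro exp_le_one_minus_power_pred) auto
  then have "real k * \<gamma> * exp (- (real k * \<gamma>)) * f xs \<le> real k * \<gamma> * (1 - \<gamma>) ^ (k - 1) * f xs"
    using step_pos nonneg xs_mem P_box by (intro mult_right_mono mult_left_mono) auto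
  then show ?thesis using iterate_lower_bound[OF assms(2)] unfolding tk by (simp add: algebra_simps)
qed

lemma frank_wolfe_bound_last:
  assumes "\<gamma> \<le> 1/2"
  shows "exp (-1) * f xs - L * D\<^sup>2 / 2 * real K * \<gamma>\<^sup>2 - 4 * \<gamma>\<^sup>2 * f xs \<le> f (x K)"
proof -
  define F where "F = f xs"
  define E where "E = L * D\<^sup>2 * \<gamma>\<^sup>2 / 2"
  have F: "0 \<le> F" and E: "0 \<le> E"
    using nonneg xs_mem P_box smoothness_diam_nonneg unfolding F_def E_def by auto
  obtain m where K: "K = Suc m" using run_start by (cases K) auto
  define \<delta> where "\<delta> = step_length m"
  have \<delta>: "0 < \<delta>" "\<delta> \<le> \<gamma>" "\<delta> = 1 - real m * \<gamma>"
    using step_length_bounds[of m] run_step(6)[of m] time_eq[of m] time_final K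
    unfolding \<delta>_def by auto
  have "1 \<le> m"
    using \<delta> assms by (cases m) auto
  define c where "c = real m * \<gamma> * (1 - \<gamma>) ^ (m - 1)"
  have "(exp (-1) - 4 * \<gamma>\<^sup>2) * F \<le> ((1 - \<delta>) * c + \<delta> * (1 - \<gamma>) ^ m) * F"
    using last_step_coefficient_bound[OF step_pos assms \<open>1 \<le> m\<close> \<delta>(3,1,2)] F
    unfolding c_def by (rule mult_right_mono)
  also have "\<dots> = (1 - \<delta>) * (c * F - real m * E) + \<delta> * ((1 - \<gamma>) ^ m * F) + (1 - \<delta>) * (real m * E)"
    by (simp add: algebra_simps)
  also have "\<dots> \<le> (1 - \<delta>) * f (x m) + \<delta> * ((1 - \<gamma>) ^ m * F) + real m * E"
  proof -
    have "(1 - \<delta>) * (c * F - real m * E) \<le> (1 - \<delta>) * f (x m)"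
      using iterate_lower_bound[of m] K \<delta> step_le_one unfolding c_def F_def E_def
      by (intro mult_left_mono) auto
    moreover have "(1 - \<delta>) * (real m * E) \<le> real m * E"
      using E \<delta> mult_left_le_one_le[of "real m * E" "1 - \<delta>"] by simp
    ultimately show ?thesis by linarith
  qed
  also have "\<dots> \<le> f (x K) + real K * E"
  proof -
    have "(1 - \<delta>) * f (x m) + \<delta> * ((1 - \<gamma>) ^ m * F) - E \<le> f (x K)"
      using one_step_bound[of m] K unfolding \<delta>_def F_def E_def by simp
    moreover have "real K * E = real m * E + E" using K by (simp add: algebra_simps)
    ultimately show ?thesis by linarith
  qed
  finally show ?thesis unfolding F_def E_def by (simp add: algebra_simps)
qed

lemma frank_wolfe_bound:
  assumes k: "k \<in> {1..K}"
  shows "t k * exp (- t k) * f xs - L * D\<^sup>2 / 2 * real k * \<gamma>\<^sup>2 - 4 * \<gamma>\<^sup>2 * f xs \<le> f (x k)"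
proof (cases "1/2 < \<gamma>")
  case True
  then show ?thesis using frank_wolfe_bound_large_step k by simp
next
  case False
  show ?thesis
  proof (cases "k < K")
    case True
    have "t k * exp (- t k) * f xs - L * D\<^sup>2 / 2 * real k * \<gamma>\<^sup>2 \<le> f (x k)"
      using frank_wolfe_bound_before_last[OF _ True] k by simp
    moreover have "0 \<le> 4 * \<gamma>\<^sup>2 * f xs" using nonneg xs_mem P_box by auto
    ultimately show ?thesis by linarith
  next
    case False
    then have "k = K" using k by simp
    then show ?thesis using frank_wolfe_bound_last \<open>\<not> 1/2 < \<gamma>\<close> time_final by simp
  qed
qed

end

theorem theorem2:
  "\<exists>C::real. C \<ge> 0 \<and>
    (\<forall>(n::nat) (u::nat \<Rightarrow> real) (f::(nat \<Rightarrow> real) \<Rightarrow> real) (g::(nat \<Rightarrow> real) \<Rightarrow> (nat \<Rightarrow> real))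
       (L::real) (P::(nat \<Rightarrow> real) set) (D::real) (xs::nat \<Rightarrow> real) (\<gamma>::real) (K::nat)
       (x::nat \<Rightarrow> nat \<Rightarrow> real) (t::nat \<Rightarrow> real) (v::nat \<Rightarrow> nat \<Rightarrow> real).
      u \<in> Rn n \<and> (\<forall>i<n. u i > 0) \<and>
      has_gradient_on n f g (box0 u) \<and>
      (\<forall>y\<in>box0 u. f y \<ge> 0) \<and>
      dr_submodular_on n f (box0 u) \<and>
      (\<forall>y\<in>box0 u. \<forall>z\<in>box0 u. norm_n n (vsub (g y) (g z)) \<le> L * norm_n n (vsub y z)) \<and>
      P \<noteq> {} \<and> compact P \<and> convex_n P \<and> down_closed P \<and> P \<subseteq> box0 u \<and>
      D = diam_n n P \<and>
      xs \<in> P \<and> (\<forall>y\<in>P. f y \<le> f xs) \<and>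
      0 < \<gamma> \<and> \<gamma> \<le> 1 \<and>
      nmfw_run n g P u \<gamma> K x t v
      \<longrightarrow> (\<forall>k\<in>{1..K}.
            f (x k) \<ge> t k * exp (- t k) * f xs - L * D\<^sup>2 / 2 * real k * \<gamma>\<^sup>2 - C * \<gamma>\<^sup>2 * f xs))"
  apply (intro exI[of _ "4::real"] conjI allI impI ballI)
   apply simp
  subgoal premises hyps for n u f g L P D xs \<gamma> K x t v k
  proof -
    interpret nmfw_analysis n u f g L P D xs \<gamma> K x t v
      using hyps(1) by unfold_locales auto
    show ?thesis using frank_wolfe_bound[OF hyps(2)] by simp
  qed
  done

end
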